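(* Suppose Assumptions 1–4 hold and $p$ is convex. Let $$s=\inf\{q\ge0 : p(q)=\min_n C_n'(0)\},\qquad t=\inf\{q\ge0:\ \min_n C_n'(q)\ge p(q)+q\,\partial_+p(q)\}.$$ If $\partial_-p(s)<0$, then every Cournot candidate $\mathbf{x}$ satisfies $\gamma(\mathbf{x})\ge f\big(\partial_+p(t)/\partial_-p(s)\big)$.
   Context: Cournot model: $N$ suppliers, inverse demand $p:[0,\infty)\to[0,\infty)$, supplier $n$ has cost $C_n:[0,\infty)\to[0,\infty)$ and chooses $x_n\ge0$; $X=\sum_n x_n$. $\partial_\pm$ denote right/left derivatives; $C_n'(0)$ is the right derivative at $0$. Assumption 1: each $C_n$ is convex, continuous, nondecreasing on $[0,\infty)$, continuously differentiable on $(0,\infty)$, with $C_n(0)=0$. Assumption 2: $p$ is continuous, nonnegative, nonincreasing, $p(0)>0$; its right derivative at $0$ exists and at every $q>0$ its left and right derivatives exist. Assumption 3: there exists $R>0$ such that $p(R)\le\min_n C_n'(0)$ (this guarantees $s,t$ are finite). Assumption 4: $p(0)>\min_n C_n'(0)$. Social welfare of $\mathbf{x}\ge0$: $W(\mathbf{x})=\int_0^X p(q)\,dq-\sum_{n=1}^N C_n(x_n)$; a social optimum $\mathbf{x}^S$ maximizes $W$. Efficiency: $\gamma(\mathbf{x})=W(\mathbf{x})/W(\mathbf{x}^S)$. A nonnegative vector $\mathbf{x}$ is a Cournot candidate if for every $n$: $C_n'(x_n)\le p(X)+x_n\,\partial_-p(X)$ whenever $x_n>0$, and $C_n'(x_n)\ge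 p(X)+x_n\,\partial_+p(X)$. For $\overline c\ge1$: $f(\overline c)=\dfrac{\phi^2+2}{\phi^2+2\phi+\overline c}$ with $\phi=\max\left\{\dfrac{2-\overline c+\sqrt{\overline c^{\,2}-4\overline c+12}}{2},1\right\}$. *)

theory Defs
  imports "HOL-Analysis.Analysis"
begin

definition rderiv :: "(real \<Rightarrow> real) \<Rightarrow> real \<Rightarrow> real" where
  "rderiv f q = (THE D. (f has_real_derivative D) (at q within {q..}))"

definition lderiv :: "(real \<Rightarrow> real) \<Rightarrow> real \<Rightarrow> real" where
  "lderiv f q = (THE D. (f has_real_derivative D) (at q within {..q}))"

text \<open>Suppliers are indexed by n < N; a production vector is x :: nat => real.\<close>
definition total :: "nat \<Rightarrow> (nat \<Rightarrow> real) \<Rightarrow> real" where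
  "total N x = (\<Sum>n<N. x n)"

definition nonneg_vec :: "nat \<Rightarrow> (nat \<Rightarrow> real) \<Rightarrow> bool" where
  "nonneg_vec N x \<longleftrightarrow> (\<forall>n<N. 0 \<le> x n)"

definition welfare :: "nat \<Rightarrow> (real \<Rightarrow> real) \<Rightarrow> (nat \<Rightarrow> real \<Rightarrow> real) \<Rightarrow> (nat \<Rightarrow> real) \<Rightarrow> real" where
  "welfare N p C x = integral {0..total N x} p - (\<Sum>n<N. C n (x n))"

definition social_optimum :: "nat \<Rightarrow> (real \<Rightarrow> real) \<Rightarrow> (nat \<Rightarrow> real \<Rightarrow> real) \<Rightarrow> (nat \<Rightarrow> real) \<Rightarrow> bool" where
  "social_optimum N p C xS \<longleftrightarrow> nonneg_vec N xS \<and>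
     (\<forall>y. nonneg_vec N y \<longrightarrow> welfare N p C y \<le> welfare N p C xS)"

definition efficiency :: "nat \<Rightarrow> (real \<Rightarrow> real) \<Rightarrow> (nat \<Rightarrow> real \<Rightarrow> real) \<Rightarrow> (nat \<Rightarrow> real) \<Rightarrow> (nat \<Rightarrow> real) \<Rightarrow> real" where
  "efficiency N p C xS x = welfare N p C x / welfare N p C xS"

definition cournot_candidate :: "nat \<Rightarrow> (real \<Rightarrow> real) \<Rightarrow> (nat \<Rightarrow> real \<Rightarrow> real) \<Rightarrow> (nat \<Rightarrow> real) \<Rightarrow> bool" where
  "cournot_candidate N p C x \<longleftrightarrow> nonneg_vec N x \<and>
     (\<forall>n<N. (0 < x n \<longrightarrow> rderiv (C n) (x n) \<le> p (total N x) + x n * lderiv p (total N x)) \<and>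
            rderiv (C n) (x n) \<ge> p (total N x) + x n * rderiv p (total N x))"

definition phi :: "real \<Rightarrow> real" where
  "phi c = max ((2 - c + sqrt (c\<^sup>2 - 4 * c + 12)) / 2) 1"

definition f_bound :: "real \<Rightarrow> real" where
  "f_bound c = ((phi c)\<^sup>2 + 2) / ((phi c)\<^sup>2 + 2 * phi c + c)"

definition minC' :: "nat \<Rightarrow> (nat \<Rightarrow> real \<Rightarrow> real) \<Rightarrow> real \<Rightarrow> real" where
  "minC' N C q = Min ((\<lambda>n. rderiv (C n) q) ` {..<N})"

end

theory Submission
  imports Defs
begin

(*
  Fix a Cournot candidate x with total output X > 0 and write alpha = -p'_-(X),
  beta = -p'_+(X), c = p'_+(t) / p'_-(s) >= 1 and m = max_n x_n.  The argument has
  two halves.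
  (1) Welfare of x from below: the first-order conditions bound every cost by
      C_n(x_n) <= (p(X) - alpha x_n) x_n, and p lies above its left tangent at X, so
      W(x) >= alpha (X^2/2 + sum_n x_n^2).
  (2) Welfare gain of any y >= 0 over x from above: cost changes are bounded below
      by supporting lines of the convex costs, revenue changes from above by convexity
      of p (p stays below its chord up to s and below min_n C_n'(0) beyond s); a
      quadratic optimisation over the reallocation gives
      W(y) - W(x) <= beta (m (X - m) + c m^2/2) <= kappa(c) W(x),
      where kappa(c) is chosen with f(c) = 1/(1 + kappa(c)).
*)

section \<open>One-sided derivatives of convex functions on the line\<close>

lemma convex_on_between:
  fixes f :: "real \<Rightarrow> real"
  assumes "convex_on I f" "a \<in> I" "b \<in> I" "a \<le> y" "y \<le> b"
  shows "y \<in> I"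
  using convex_on_imp_convex[OF assms(1)] assms(2-)
  by (metis is_interval_convex_1 mem_is_interval_1_I)

lemma convex_on_chord_slopes:
  fixes f :: "real \<Rightarrow> real"
  assumes "convex_on I f" "a \<in> I" "c \<in> I" "a < b" "b < c"
  shows "(f b - f a) / (b - a) \<le> (f c - f a) / (c - a)"
    and "(f c - f a) / (c - a) \<le> (f c - f b) / (c - b)"
  using convex_on_slope_le[OF assms] by (metis minus_diff_eq minus_divide_divide)+

lemma right_derivative_le_slope:
  fixes f :: "real \<Rightarrow> real"
  assumes f: "convex_on I f" and "a \<in> I" "b \<in> I" "a < b"
    and D: "(f has_real_derivative D) (at a within {a..})"
  shows "D \<le> (f b - f a) / (b - a)"
proof -
  have "((\<lambda>y. (f y - f a) / (y - a)) \<longlongrightarrow> D) (at_right a)"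
    using D unfolding has_field_derivative_iff at_within_Ici_at_right .
  moreover have "\<forall>\<^sub>F y in at_right a. (f y - f a) / (y - a) \<le> (f b - f a) / (b - a)"
    using assms by (intro eventually_at_rightI[of a b]) (auto intro: convex_on_chord_slopes(1)[OF f])
  ultimately show ?thesis by (rule tendsto_upperbound) simp
qed

lemma slope_le_left_derivative:
  fixes f :: "real \<Rightarrow> real"
  assumes f: "convex_on I f" and "a \<in> I" "b \<in> I" "a < b"
    and D: "(f has_real_derivative D) (at b within {..b})"
  shows "(f b - f a) / (b - a) \<le> D"
proof -
  have "((\<lambda>y. (f y - f b) / (y - b)) \<longlongrightarrow> D) (at_left b)"
    using D unfolding has_field_derivative_iff at_within_Iic_at_left .
  moreover have "\<forall>\<^sub>F y in at_left b. (f b - f a) / (b - a) \<le> (f y - f b) / (y - b)"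
  proof (intro eventually_at_leftI[of a b])
    fix y assume "y \<in> {a<..<b}"
    then have "(f b - f a) / (b - a) \<le> (f b - f y) / (b - y)"
      using convex_on_chord_slopes(2)[OF f, of a b y] assms by auto
    then show "(f b - f a) / (b - a) \<le> (f y - f b) / (y - b)"
      by (metis minus_diff_eq minus_divide_divide)
  qed (use assms in auto)
  ultimately show ?thesis by (rule tendsto_lowerbound) simp
qed

lemma left_derivative_le_right_derivative:
  fixes f :: "real \<Rightarrow> real"
  assumes f: "convex_on I f" and I: "a \<in> I" "b \<in> I" "a < q" "q < b"
    and Dl: "(f has_real_derivative Dl) (at q within {..q})"
    and Dr: "(f has_real_derivative Dr) (at q within {q..})"
  shows "Dl \<le> Dr"
proof -
  have q: "q \<in> I" using convex_on_between[OF f I(1,2)] I by auto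
  have Dl_le: "Dl \<le> (f z - f q) / (z - q)" if z: "q < z" "z < b" for z
  proof -
    have z_in: "z \<in> I" using convex_on_between[OF f q I(2)] z by auto
    have "((\<lambda>y. (f y - f q) / (y - q)) \<longlongrightarrow> Dl) (at_left q)"
      using Dl unfolding has_field_derivative_iff at_within_Iic_at_left .
    moreover have "\<forall>\<^sub>F y in at_left q. (f y - f q) / (y - q) \<le> (f z - f q) / (z - q)"
    proof (intro eventually_at_leftI[of a q])
      fix y assume y: "y \<in> {a<..<q}"
      then have "y \<in> I" using convex_on_between[OF f I(1) q] by auto
      then have "(f q - f y) / (q - y) \<le> (f z - f q) / (z - q)"
        using convex_on_chord_slopes[OF f _ z_in, of y q] y z by force
      then show "(f y - f q) / (y - q) \<le> (f z - f q) / (z - q)"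
        by (metis minus_diff_eq minus_divide_divide)
    qed (use I in auto)
    ultimately show ?thesis by (rule tendsto_upperbound) simp
  qed
  have "((\<lambda>y. (f y - f q) / (y - q)) \<longlongrightarrow> Dr) (at_right q)"
    using Dr unfolding has_field_derivative_iff at_within_Ici_at_right .
  moreover have "\<forall>\<^sub>F y in at_right q. Dl \<le> (f y - f q) / (y - q)"
    using Dl_le I by (intro eventually_at_rightI[of q b]) auto
  ultimately show ?thesis by (rule tendsto_lowerbound) simp
qed

lemma right_derivative_le_left_derivative:
  fixes f :: "real \<Rightarrow> real"
  assumes f: "convex_on I f" and "a \<in> I" "b \<in> I" "a < b"
    and Da: "(f has_real_derivative Da) (at a within {a..})"
    and Db: "(f has_real_derivative Db) (at b within {..b})"
  shows "Da \<le> Db"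
  using right_derivative_le_slope[OF f assms(2-4) Da] slope_le_left_derivative[OF f assms(2-4) Db]
  by linarith

lemma convex_right_tangent_le:
  fixes f :: "real \<Rightarrow> real"
  assumes f: "convex_on I f" and "a \<in> I" "y \<in> I" "a \<le> y"
    and D: "(f has_real_derivative D) (at a within {a..})"
  shows "f a + D * (y - a) \<le> f y"
proof (cases "a = y")
  case False
  then have "D \<le> (f y - f a) / (y - a)" using right_derivative_le_slope[OF f _ _ _ D] assms by auto
  then show ?thesis using False assms by (simp add: pos_le_divide_eq mult.commute)
qed simp

lemma convex_left_tangent_le:
  fixes f :: "real \<Rightarrow> real"
  assumes f: "convex_on I f" and "y \<in> I" "a \<in> I" "y \<le> a"
    and D: "(f has_real_derivative D) (at a within {..a})"
  shows "f a + D * (y - a) \<le> f y"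
proof (cases "a = y")
  case False
  then have "(f a - f y) / (a - y) \<le> D" using slope_le_left_derivative[OF f _ _ _ D] assms by auto
  then have "f a - f y \<le> D * (a - y)" using False assms by (simp add: pos_divide_le_eq)
  then show ?thesis by (simp add: algebra_simps)
qed simp

text \<open>A nondecreasing convex function has a right derivative at every point of its domain
  that has a right neighbour: the difference quotients decrease and are bounded below by 0.\<close>
lemma convex_mono_has_right_derivative:
  fixes f :: "real \<Rightarrow> real"
  assumes f: "convex_on I f" and mono: "mono_on I f" and I: "a \<in> I" "b \<in> I" "a < b"
  shows "\<exists>D. (f has_real_derivative D) (at a within {a..})"
proof -
  define g where "g y = (f y - f a) / (y - a)" for y
  define L where "L = Inf (g ` {a<..<b})"
  have in_I: "y \<in> I" if "a \<le> y" "y \<le> b" for y using convex_on_between[OF f I(1,2)] that .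
  have g_nonneg: "0 \<le> g y" if "a < y" "y < b" for y
    using mono_onD[OF mono I(1) in_I, of y] that by (simp add: g_def)
  have g_mono: "g y \<le> g z" if "a < y" "y < z" "z < b" for y z
    using convex_on_chord_slopes(1)[OF f I(1) in_I, of z y] that by (simp add: g_def)
  have bdd: "bdd_below (g ` {a<..<b})" using g_nonneg by (auto intro!: bdd_belowI[of _ 0])
  have "(g \<longlongrightarrow> L) (at_right a)"
  proof (rule decreasing_tendsto)
    show "\<forall>\<^sub>F y in at_right a. L \<le> g y"
      unfolding L_def using bdd I by (intro eventually_at_rightI[of a b]) (auto intro!: cInf_lower)
    fix e assume "L < e"
    then obtain z where z: "a < z" "z < b" "g z < e"
      unfolding L_def using cInf_lessD[of "g ` {a<..<b}" e] I by auto
    show "\<forall>\<^sub>F y in at_right a. g y < e"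
      using g_mono z by (intro eventually_at_rightI[of a z]) force+
  qed
  then have "(f has_real_derivative L) (at a within {a..})"
    unfolding has_field_derivative_iff at_within_Ici_at_right g_def .
  then show ?thesis by blast
qed

lemma rderiv_eq:
  assumes "(f has_real_derivative D) (at q within {q..})"
  shows "rderiv f q = D"
  unfolding rderiv_def
proof (rule the_equality)
  fix E assume "(f has_real_derivative E) (at q within {q..})"
  then show "E = D" using has_field_derivative_unique[OF _ assms] by (simp add: at_within_Ici_at_right)
qed fact

lemma lderiv_eq:
  assumes "(f has_real_derivative D) (at q within {..q})"
  shows "lderiv f q = D"
  unfolding lderiv_def
proof (rule the_equality)
  fix E assume "(f has_real_derivative E) (at q within {..q})"
  then show "E = D" using has_field_derivative_unique[OF _ assms] by (simp add: at_within_Iic_at_left)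
qed fact

lemma affine_has_integral:
  fixes A B a b :: real
  assumes "a \<le> b"
  shows "((\<lambda>q. A + B * (q - a)) has_integral (A * (b - a) + B * (b - a)^2 / 2)) {a..b}"
proof -
  let ?F = "\<lambda>q. A * (q - a) + B * (q - a)^2 / 2"
  have "((\<lambda>q. A + B * (q - a)) has_integral (?F b - ?F a)) {a..b}"
    by (rule fundamental_theorem_of_calculus[OF assms])
       (auto simp: has_real_derivative_iff_has_vector_derivative[symmetric] intro!: derivative_eq_intros)
  then show ?thesis by simp
qed

lemma integral_le_affine:
  fixes f :: "real \<Rightarrow> real"
  assumes "a \<le> b" "continuous_on {a..b} f" "\<And>q. q \<in> {a..b} \<Longrightarrow> f q \<le> A + B * (q - a)"
  shows "integral {a..b} f \<le> A * (b - a) + B * (b - a)^2 / 2"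
  using has_integral_le[OF integrable_integral[OF integrable_continuous_interval[OF assms(2)]]
      affine_has_integral[OF assms(1)]] assms(3)
  by auto

lemma integral_ge_affine:
  fixes f :: "real \<Rightarrow> real"
  assumes "a \<le> b" "continuous_on {a..b} f" "\<And>q. q \<in> {a..b} \<Longrightarrow> A + B * (q - a) \<le> f q"
  shows "A * (b - a) + B * (b - a)^2 / 2 \<le> integral {a..b} f"
  using has_integral_le[OF affine_has_integral[OF assms(1)]
      integrable_integral[OF integrable_continuous_interval[OF assms(2)]]] assms(3)
  by auto

text \<open>Moving a quantity u_n into and v_n <= x_n out of the positions of x, at marginal gains
  proportional to x_n and with a quadratic penalty on the net change, gains at most what
  concentrating everything on a largest position m gains.\<close>
lemma reallocation_gain_le:
  fixes x u v :: "nat \<Rightarrow> real"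
  assumes N: "0 < N" and x: "\<And>n. n < N \<Longrightarrow> 0 \<le> x n"
    and u: "\<And>n. n < N \<Longrightarrow> 0 \<le> u n" and v: "\<And>n. n < N \<Longrightarrow> 0 \<le> v n \<and> v n \<le> x n"
    and l: "0 \<le> l" and c: "0 < c"
    and m: "m = Max (x ` {..<N})"
  shows "l * (\<Sum>n<N. x n * u n) - (\<Sum>n<N. x n * v n) - (l * (\<Sum>n<N. u n) - (\<Sum>n<N. v n))^2 / (2 * c)
         \<le> m * ((\<Sum>n<N. x n) - m) + c * m^2 / 2"
proof -
  have fin: "finite (x ` {..<N})" "x ` {..<N} \<noteq> {}" using N by auto
  have x_le_m: "x n \<le> m" if "n < N" for n using that m fin by auto
  obtain k where k: "k < N" "m = x k" using Max_in[OF fin] m by auto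
  define w where "w = l * (\<Sum>n<N. u n) - (\<Sum>n<N. v n)"
  have gain_in: "l * (\<Sum>n<N. x n * u n) \<le> m * w + m * (\<Sum>n<N. v n)"
  proof -
    have "(\<Sum>n<N. x n * u n) \<le> m * (\<Sum>n<N. u n)"
      unfolding sum_distrib_left by (intro sum_mono mult_right_mono x_le_m u) auto
    from mult_left_mono[OF this l] show ?thesis by (simp add: w_def algebra_simps)
  qed
  have "m * (\<Sum>n<N. v n) - (\<Sum>n<N. x n * v n) = (\<Sum>n<N. (m - x n) * v n)"
    by (simp add: sum_distrib_left sum_subtractf algebra_simps)
  also have "\<dots> \<le> (\<Sum>n<N. (m - x n) * x n)"
    by (intro sum_mono mult_left_mono) (auto simp: x_le_m v)
  also have "\<dots> = m * (\<Sum>n<N. x n) - (\<Sum>n<N. x n ^ 2)"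
    by (simp add: sum_distrib_left sum_subtractf algebra_simps power2_eq_square)
  also have "\<dots> \<le> m * (\<Sum>n<N. x n) - m^2"
    using member_le_sum[of k "{..<N}" "\<lambda>n. x n ^ 2"] k by auto
  finally have loss_out: "m * (\<Sum>n<N. v n) - (\<Sum>n<N. x n * v n) \<le> m * (\<Sum>n<N. x n) - m^2" .
  have "m * w - w^2 / (2 * c) \<le> c * m^2 / 2"
  proof -
    have "0 \<le> (w - c * m)^2 / (2 * c)" using c by simp
    also have "\<dots> = c * m^2 / 2 - (m * w - w^2 / (2 * c))"
      using c by (simp add: field_simps power2_eq_square)
    finally show ?thesis by simp
  qed
  with gain_in loss_out show ?thesis
    unfolding w_def[symmetric] by (simp add: algebra_simps power2_eq_square)
qed

definition kappa :: "real \<Rightarrow> real" where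
  "kappa c = (2 * phi c - 2 + c) / ((phi c)^2 + 2)"

lemma f_bound_kappa: "f_bound c = 1 / (1 + kappa c)"
proof -
  have "(phi c)^2 + 2 > 0" by (simp add: add_nonneg_pos)
  then show ?thesis unfolding f_bound_def kappa_def by (simp add: field_simps)
qed

lemma kappa_nonneg: "1 \<le> c \<Longrightarrow> 0 \<le> kappa c"
  unfolding kappa_def phi_def by (intro divide_nonneg_pos) (auto simp: add_nonneg_pos)

lemma phi_cases:
  assumes "1 \<le> c"
  obtains "1 \<le> phi c" "(phi c)^2 = (2 - c) * phi c + 2"
  | "phi c = 1" "3 < c"
proof -
  define S where "S = sqrt (c^2 - 4 * c + 12)"
  define r where "r = (2 - c + S) / 2"
  have disc: "c^2 - 4 * c + 12 = (2 - c)^2 + 8" by (simp add: power2_eq_square algebra_simps)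
  have S2: "S^2 = (2 - c)^2 + 8" unfolding S_def disc by simp
  have r_root: "r^2 = (2 - c) * r + 2"
    unfolding r_def using S2 by (simp add: power2_eq_square field_simps)
  have phi_r: "phi c = max r 1" unfolding phi_def r_def S_def by simp
  show ?thesis
  proof (cases "1 \<le> r")
    case True
    then show ?thesis using that(1) phi_r r_root by simp
  next
    case False
    have "3 < c"
    proof (rule ccontr)
      assume "\<not> 3 < c"
      then have "sqrt (c^2) \<le> S" unfolding S_def by (intro real_sqrt_le_mono) simp
      then show False using False assms unfolding r_def by simp
    qed
    then show ?thesis using that(2) phi_r False by simp
  qed
qed

lemma kappa_bound:
  fixes c m X :: real
  assumes c: "1 \<le> c" and m: "0 \<le> m" "m \<le> X"
  shows "m * (X - m) + c * m^2 / 2 \<le> kappa c * (X^2 / 2 + m^2)"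
  using c
proof (cases rule: phi_cases)
  case 1
  define r where "r = phi c"
  have r_pos: "0 < r" using 1 by (simp add: r_def)
  have den: "r * r + 2 \<noteq> 0" using r_pos by (smt (verit) mult_pos_pos)
  have "kappa c = 1 / r"
    using 1 den unfolding kappa_def r_def[symmetric] by (simp add: field_simps power2_eq_square)
  moreover have "r * (m * (X - m) + c * m^2 / 2) \<le> X^2 / 2 + m^2"
  proof -
    have "0 \<le> (X - r * m)^2" by simp
    also have "(X - r * m)^2 = X^2 - 2 * r * m * X + m^2 * r^2"
      by (simp add: power2_eq_square algebra_simps)
    also have "m^2 * r^2 = m^2 * ((2 - c) * r + 2)"
      using 1 by (simp add: r_def)
    finally show ?thesis by (simp add: algebra_simps power2_eq_square)
  qed
  ultimately show ?thesis using r_pos by (simp add: pos_le_divide_eq mult.commute)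
next
  case 2
  then have "6 * m \<le> c * X + c * m"
    using m mult_left_mono[of m X c] mult_right_mono[of 3 c m] by linarith
  then have "0 \<le> (X - m) * (c * X + c * m - 6 * m)"
    using m by (intro mult_nonneg_nonneg) auto
  then show ?thesis using 2 unfolding kappa_def by (simp add: algebra_simps power2_eq_square)
qed

section \<open>Markets with convex costs and convex inverse demand\<close>

text \<open>Assumptions 1 and 2 of the model (as far as they are needed), with p convex.\<close>
locale convex_market =
  fixes N :: nat and p :: "real \<Rightarrow> real" and C :: "nat \<Rightarrow> real \<Rightarrow> real"
  assumes N_pos: "0 < N"
    and C_convex: "n < N \<Longrightarrow> convex_on {0..} (C n)"
    and C_mono: "n < N \<Longrightarrow> mono_on {0..} (C n)"
    and C_differentiable: "n < N \<Longrightarrow> 0 < q \<Longrightarrow> C n differentiable (at q)"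
    and C_zero: "n < N \<Longrightarrow> C n 0 = 0"
    and p_cont: "continuous_on {0..} p"
    and p_antimono: "antimono_on {0..} p"
    and p_convex: "convex_on {0..} p"
    and p_rderiv_exists: "0 \<le> q \<Longrightarrow> \<exists>D. (p has_real_derivative D) (at q within {q..})"
    and p_lderiv_exists: "0 < q \<Longrightarrow> \<exists>D. (p has_real_derivative D) (at q within {..q})"
begin

abbreviation c0 :: real where "c0 \<equiv> minC' N C 0"

lemma C_has_rderiv:
  assumes n: "n < N" and q: "0 \<le> q"
  shows "(C n has_real_derivative rderiv (C n) q) (at q within {q..})"
proof -
  obtain D where D: "(C n has_real_derivative D) (at q within {q..})"
  proof (cases "q = 0")
    case True
    have "\<exists>D. (C n has_real_derivative D) (at 0 within {0..})"
      by (rule convex_mono_has_right_derivative[OF C_convex[OF n] C_mono[OF n], of 0 1]) simp_all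
    with True that show ?thesis by blast
  next
    case False
    with q have "C n differentiable (at q)" using C_differentiable[OF n] by simp
    then obtain D where "(C n has_real_derivative D) (at q)" by (rule real_differentiableE)
    then show ?thesis using that has_field_derivative_at_within by blast
  qed
  show ?thesis using D unfolding rderiv_eq[OF D] .
qed

text \<open>Away from 0 the costs are differentiable, so both one-sided derivatives agree.\<close>
lemma C_has_lderiv:
  assumes n: "n < N" and q: "0 < q"
  shows "(C n has_real_derivative rderiv (C n) q) (at q within {..q})"
proof -
  obtain D where D: "(C n has_real_derivative D) (at q)"
    using C_differentiable[OF n q] by (rule real_differentiableE)
  have "rderiv (C n) q = D" by (rule rderiv_eq[OF has_field_derivative_at_within[OF D]])
  with D show ?thesis by (simp add: has_field_derivative_at_within)
qed

lemma C_tangent_le: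
  assumes n: "n < N" and a: "0 \<le> a" and y: "0 \<le> y"
  shows "C n a + rderiv (C n) a * (y - a) \<le> C n y"
proof (cases "a \<le> y")
  case True
  show ?thesis
    by (rule convex_right_tangent_le[OF C_convex[OF n] _ _ True C_has_rderiv[OF n a]])
       (use a y in simp_all)
next
  case False
  with y have "0 < a" by simp
  show ?thesis
    by (rule convex_left_tangent_le[OF C_convex[OF n] _ _ _ C_has_lderiv[OF n \<open>0 < a\<close>]])
       (use False y in simp_all)
qed

lemma C_rderiv_mono:
  assumes n: "n < N" and a: "0 \<le> a" and ab: "a \<le> b"
  shows "rderiv (C n) a \<le> rderiv (C n) b"
proof (cases "a = b")
  case False
  with a ab have "a < b" "0 < b" by simp_all
  show ?thesis
    by (rule right_derivative_le_left_derivative[OF C_convex[OF n] _ _ \<open>a < b\<close>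
          C_has_rderiv[OF n a] C_has_lderiv[OF n \<open>0 < b\<close>]]) (use a ab in simp_all)
qed simp

lemma minC'_le: "n < N \<Longrightarrow> minC' N C q \<le> rderiv (C n) q"
  unfolding minC'_def by (intro Min_le) auto

lemma minC'_attained: "\<exists>n<N. minC' N C q = rderiv (C n) q"
proof -
  have "Min ((\<lambda>n. rderiv (C n) q) ` {..<N}) \<in> (\<lambda>n. rderiv (C n) q) ` {..<N}"
    using N_pos by (intro Min_in) auto
  then show ?thesis unfolding minC'_def by auto
qed

lemma c0_le_rderiv: "n < N \<Longrightarrow> 0 \<le> q \<Longrightarrow> c0 \<le> rderiv (C n) q"
  using minC'_le C_rderiv_mono order_trans by blast

lemma p_antimonoD: "0 \<le> a \<Longrightarrow> a \<le> b \<Longrightarrow> p b \<le> p a"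
  using monotone_onD[OF p_antimono] by auto

lemma p_continuous_on: "0 \<le> a \<Longrightarrow> continuous_on {a..b} p"
  using continuous_on_subset[OF p_cont] by auto

lemma p_integral_split:
  assumes "0 \<le> a" "a \<le> b" "b \<le> c"
  shows "integral {a..b} p + integral {b..c} p = integral {a..c} p"
  using Henstock_Kurzweil_Integration.integral_combine[OF assms(2,3)
      integrable_continuous_interval[OF p_continuous_on[OF assms(1)]]] .

lemma p_has_rderiv: "0 \<le> q \<Longrightarrow> (p has_real_derivative rderiv p q) (at q within {q..})"
  using p_rderiv_exists rderiv_eq by blast

lemma p_has_lderiv: "0 < q \<Longrightarrow> (p has_real_derivative lderiv p q) (at q within {..q})"
  using p_lderiv_exists lderiv_eq by blast

lemma p_left_tangent_le: "0 \<le> y \<Longrightarrow> y \<le> a \<Longrightarrow> 0 < a \<Longrightarrow> p a + lderiv p a * (y - a) \<le> p y"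
  using convex_left_tangent_le[OF p_convex _ _ _ p_has_lderiv] by auto

lemma p_lderiv_le_rderiv: "0 < q \<Longrightarrow> lderiv p q \<le> rderiv p q"
  using left_derivative_le_right_derivative[OF p_convex, of 0 "q + 1" q] p_has_lderiv p_has_rderiv
  by auto

lemma p_rderiv_le_lderiv: "0 \<le> a \<Longrightarrow> a < b \<Longrightarrow> rderiv p a \<le> lderiv p b"
  using right_derivative_le_left_derivative[OF p_convex _ _ _ p_has_rderiv p_has_lderiv] by auto

lemma p_rderiv_nonpos:
  assumes "0 \<le> q"
  shows "rderiv p q \<le> 0"
proof -
  have "rderiv p q \<le> (p (q + 1) - p q) / ((q + 1) - q)"
    by (rule right_derivative_le_slope[OF p_convex _ _ _ p_has_rderiv[OF assms]]) (use assms in simp_all)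
  also have "\<dots> \<le> 0" using p_antimonoD[of q "q + 1"] assms by simp
  finally show ?thesis .
qed

lemma p_le_left_slope_line:
  assumes "0 \<le> a" "a \<le> q" "q \<le> b" "0 < b"
  shows "p q \<le> p a + lderiv p b * (q - a)"
proof (cases "a = q")
  case False
  then have ab: "a < b" using assms by auto
  have "convex_on {a..b} p" using convex_on_subset[OF p_convex] assms by auto
  then have "p q \<le> (p b - p a) / (b - a) * (q - a) + p a"
    using convex_onD_Icc'[of a b p q] assms by auto
  also have "(p b - p a) / (b - a) * (q - a) \<le> lderiv p b * (q - a)"
    using slope_le_left_derivative[OF p_convex _ _ ab p_has_lderiv] assms
    by (intro mult_right_mono) auto
  finally show ?thesis by simp
qed simp

end

locale convex_cournot = convex_market +
  fixes s t :: real
  assumes demand_reaches_c0: "\<exists>R>0. p R \<le> minC' N C 0"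
    and demand_exceeds_c0: "minC' N C 0 < p 0"
    and s_def: "s = Inf {q. 0 \<le> q \<and> p q = minC' N C 0}"
    and t_def: "t = Inf {q. 0 \<le> q \<and> minC' N C q \<ge> p q + q * rderiv p q}"
    and lderiv_s_neg: "lderiv p s < 0"
begin

abbreviation slope_ratio :: real where "slope_ratio \<equiv> rderiv p t / lderiv p s"

lemma s_pos_and_price: "0 < s" "p s = c0"
proof -
  define S where "S = {q. 0 \<le> q \<and> p q = c0}"
  obtain R where R: "0 < R" "p R \<le> c0" using demand_reaches_c0 by auto
  then obtain q where "0 \<le> q" "q \<le> R" "p q = c0"
    using IVT2'[of p R c0 0] p_continuous_on demand_exceeds_c0 by auto
  then have nonempty: "S \<noteq> {}" unfolding S_def by auto
  have "S = {q \<in> {0..}. p q = c0}" unfolding S_def by auto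
  then have closed: "closed S" using continuous_closed_preimage_constant[OF p_cont closed_atLeast] by simp
  have bdd: "bdd_below S" unfolding S_def by (auto intro!: bdd_belowI[of _ 0])
  have "s \<in> S" unfolding s_def S_def[symmetric] using closed_contains_Inf[OF nonempty bdd closed] .
  then show "p s = c0" and "0 < s" using demand_exceeds_c0 unfolding S_def by (auto simp: le_less)
qed

lemma price_beyond_s: "s \<le> q \<Longrightarrow> p q \<le> c0"
  using p_antimonoD[of s q] s_pos_and_price by auto

lemma t_le: "0 \<le> q \<Longrightarrow> p q + q * rderiv p q \<le> minC' N C q \<Longrightarrow> t \<le> q"
  unfolding t_def by (rule cInf_lower) (auto intro!: bdd_belowI[of _ 0])

text \<open>At s/2 every marginal cost is at least c0 = p(s), which dominates p + q p'_+.\<close>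
lemma half_s_condition: "p (s/2) + s/2 * rderiv p (s/2) \<le> minC' N C (s/2)"
proof -
  have s: "0 < s" "p s = c0" by (fact s_pos_and_price)+
  obtain n where n: "n < N" "minC' N C (s/2) = rderiv (C n) (s/2)" using minC'_attained by blast
  have "s/2 * rderiv p (s/2) \<le> s/2 * ((p s - p (s/2)) / (s - s/2))"
    using right_derivative_le_slope[OF p_convex _ _ _ p_has_rderiv, of "s/2" s] s
    by (intro mult_left_mono) auto
  also have "\<dots> = p s - p (s/2)" using s by (simp add: field_simps)
  finally show ?thesis using c0_le_rderiv[OF n(1), of "s/2"] n s by auto
qed

lemma t_nonneg: "0 \<le> t"
proof -
  have "s/2 \<in> {q. 0 \<le> q \<and> minC' N C q \<ge> p q + q * rderiv p q}"
    using half_s_condition s_pos_and_price by auto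
  then have "{q. 0 \<le> q \<and> minC' N C q \<ge> p q + q * rderiv p q} \<noteq> {}" by blast
  then show ?thesis unfolding t_def by (rule cInf_greatest) auto
qed

lemma t_lt_s: "t < s"
  using t_le[OF _ half_s_condition] s_pos_and_price by auto

lemma slope_ratio_ge_1: "1 \<le> slope_ratio"
  using p_rderiv_le_lderiv[OF t_nonneg t_lt_s] lderiv_s_neg by (simp add: le_divide_eq_1_neg)

end

locale cournot_candidate_point = convex_cournot +
  fixes x :: "nat \<Rightarrow> real"
  assumes candidate: "cournot_candidate N p C x"
begin

abbreviation X :: real where "X \<equiv> total N x"
abbreviation alpha :: real where "alpha \<equiv> - lderiv p X"
abbreviation beta :: real where "beta \<equiv> - rderiv p X"
abbreviation xmax :: real where "xmax \<equiv> Max (x ` {..<N})"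

lemma total_eq_sum: "X = (\<Sum>n<N. x n)"
  unfolding total_def ..

lemma x_nonneg: "n < N \<Longrightarrow> 0 \<le> x n"
  using candidate unfolding cournot_candidate_def nonneg_vec_def by auto

lemma foc_upper: "n < N \<Longrightarrow> 0 < x n \<Longrightarrow> rderiv (C n) (x n) \<le> p X - alpha * x n"
  using candidate unfolding cournot_candidate_def by (auto simp: mult.commute)

lemma foc_lower: "n < N \<Longrightarrow> p X - beta * x n \<le> rderiv (C n) (x n)"
  using candidate unfolding cournot_candidate_def by (auto simp: mult.commute)

lemma x_le_total: "n < N \<Longrightarrow> x n \<le> X"
  unfolding total_eq_sum using member_le_sum[of n "{..<N}" x] x_nonneg by auto

lemma xmax_props: "0 \<le> xmax" "xmax \<le> X" "xmax^2 \<le> (\<Sum>n<N. (x n)^2)"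
proof -
  have "xmax \<in> x ` {..<N}" using N_pos by (intro Max_in) auto
  then obtain k where k: "k < N" "xmax = x k" by auto
  then show "0 \<le> xmax" "xmax \<le> X" using x_nonneg x_le_total by auto
  show "xmax^2 \<le> (\<Sum>n<N. (x n)^2)" using member_le_sum[of k "{..<N}" "\<lambda>n. (x n)^2"] k by auto
qed

text \<open>Zero output is not a candidate, since p(0) exceeds the cheapest marginal cost.\<close>
lemma total_pos: "0 < X"
proof (rule ccontr)
  assume "\<not> 0 < X"
  moreover have "0 \<le> X" unfolding total_eq_sum using x_nonneg by (intro sum_nonneg) auto
  ultimately have X0: "X = 0" by simp
  then have "x n = 0" if "n < N" for n using x_le_total[OF that] x_nonneg[OF that] by simp
  moreover obtain n where "n < N" "c0 = rderiv (C n) 0" using minC'_attained by blast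
  ultimately show False using foc_lower[of n] X0 demand_exceeds_c0 by simp
qed

text \<open>X satisfies the inequality defining t, by the lower first-order condition of a
  supplier with cheapest marginal cost at X.\<close>
lemma t_le_total: "t \<le> X"
proof (rule t_le)
  obtain n where n: "n < N" "minC' N C X = rderiv (C n) X" using minC'_attained by blast
  have "p X - beta * x n \<le> rderiv (C n) X"
    using foc_lower[OF n(1)] C_rderiv_mono[OF n(1) x_nonneg x_le_total] n by force
  moreover have "X * rderiv p X \<le> x n * rderiv p X"
    using mult_right_mono_neg[OF x_le_total[OF n(1)] p_rderiv_nonpos] total_pos by simp
  ultimately show "p X + X * rderiv p X \<le> minC' N C X" using n by (simp add: mult.commute)
qed (use total_pos in simp)

lemma beta_nonneg: "0 \<le> beta"
  using p_rderiv_nonpos total_pos by simp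

lemma beta_le_alpha: "beta \<le> alpha"
  using p_lderiv_le_rderiv total_pos by simp

lemma beta_le_rderiv_t: "beta \<le> - rderiv p t"
  using p_lderiv_le_rderiv[OF total_pos] p_rderiv_le_lderiv[OF t_nonneg, of X] t_le_total
  by (cases "t = X") auto

section \<open>Welfare of the candidate from below\<close>

text \<open>By convexity and the upper first-order condition,
  C_n(x_n) <= C_n'(x_n) x_n <= (p(X) - alpha x_n) x_n.\<close>
lemma cost_le_at_candidate: "n < N \<Longrightarrow> C n (x n) \<le> (p X - alpha * x n) * x n"
proof (cases "x n = 0")
  case False
  assume n: "n < N"
  then have "C n (x n) \<le> rderiv (C n) (x n) * x n"
    using C_tangent_le[OF n x_nonneg[OF n], of 0] C_zero by simp
  also have "\<dots> \<le> (p X - alpha * x n) * x n"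
    using foc_upper[OF n] x_nonneg[OF n] False by (intro mult_right_mono) auto
  finally show ?thesis .
qed (use C_zero in simp)

lemma welfare_candidate_ge: "integral {0..X} p - p X * X + alpha * (\<Sum>n<N. (x n)^2) \<le> welfare N p C x"
proof -
  have "(\<Sum>n<N. C n (x n)) \<le> (\<Sum>n<N. (p X - alpha * x n) * x n)"
    by (intro sum_mono cost_le_at_candidate) auto
  also have "\<dots> = (\<Sum>n<N. p X * x n - alpha * (x n)^2)"
    by (intro sum.cong) (simp_all add: power2_eq_square algebra_simps)
  also have "\<dots> = p X * X - alpha * (\<Sum>n<N. (x n)^2)"
    by (simp only: sum_subtractf sum_distrib_left total_eq_sum)
  finally show ?thesis unfolding welfare_def by simp
qed

text \<open>The revenue over [0, X] is at least that of the left tangent line of p at X.\<close>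
lemma integral_ge_tangent: "p X * X + alpha * X^2 / 2 \<le> integral {0..X} p"
proof -
  have "(p X + alpha * X) * (X - 0) + (- alpha) * (X - 0)^2 / 2 \<le> integral {0..X} p"
    using p_left_tangent_le[of _ X] total_pos
    by (intro integral_ge_affine p_continuous_on) (auto simp: algebra_simps)
  then show ?thesis by (simp add: algebra_simps power2_eq_square)
qed

lemma welfare_candidate_lower: "alpha * (X^2 / 2 + (\<Sum>n<N. (x n)^2)) \<le> welfare N p C x"
  using welfare_candidate_ge integral_ge_tangent by (simp add: algebra_simps)

text \<open>If X < s then alpha >= -p'_-(s) > 0; otherwise the revenue over [0, s] already exceeds
  p(X) s by the triangle -p'_-(s) s^2/2.\<close>
lemma welfare_candidate_pos: "0 < welfare N p C x"
proof (cases "X < s")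
  case True
  have "0 < alpha" using p_rderiv_le_lderiv[OF _ True] p_lderiv_le_rderiv total_pos lderiv_s_neg
    by (smt (verit))
  then have "0 < alpha * (X^2 / 2 + (\<Sum>n<N. (x n)^2))"
    using total_pos by (intro mult_pos_pos add_pos_nonneg sum_nonneg) auto
  then show ?thesis using welfare_candidate_lower by linarith
next
  case False
  have s: "0 < s" "p s = c0" by (fact s_pos_and_price)+
  have "(p s - lderiv p s * s) * (s - 0) + lderiv p s * (s - 0)^2 / 2 \<le> integral {0..s} p"
    using p_left_tangent_le[of _ s] s by (intro integral_ge_affine p_continuous_on) (auto simp: algebra_simps)
  then have left: "c0 * s - lderiv p s * s^2 / 2 \<le> integral {0..s} p"
    using s by (simp add: algebra_simps power2_eq_square)
  have "p X * (X - s) + 0 * (X - s)^2 / 2 \<le> integral {s..X} p"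
    using p_antimonoD[of _ X] s False by (intro integral_ge_affine p_continuous_on) auto
  then have right: "p X * X - p X * s \<le> integral {s..X} p" by (simp add: algebra_simps)
  have "p X * s \<le> c0 * s" using p_antimonoD[of s X] s False by simp
  moreover have "0 < - lderiv p s * s^2 / 2" using mult_neg_pos[OF lderiv_s_neg, of "s^2"] s by simp
  moreover have "integral {0..s} p + integral {s..X} p = integral {0..X} p"
    using p_integral_split[of 0 s X] s False by simp
  ultimately have "0 < integral {0..X} p - p X * X" using left right by linarith
  moreover have "0 \<le> alpha * (\<Sum>n<N. (x n)^2)"
    using beta_le_alpha beta_nonneg by (intro mult_nonneg_nonneg sum_nonneg) auto
  ultimately show ?thesis using welfare_candidate_ge by linarith
qed

section \<open>Welfare gains over the candidate from above\<close>

text \<open>A fraction l of an increase u is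
  charged at marginal cost at least p(X) - beta x_n (lower first-order condition), the rest
  at least c0; a decrease v saves at most p(X) - alpha x_n per unit (upper condition).\<close>
lemma cost_change_ge:
  assumes n: "n < N" and y: "0 \<le> y" and l: "0 \<le> l" "l \<le> 1"
  defines "u \<equiv> max (y - x n) 0" and "v \<equiv> max (x n - y) 0"
  shows "(p X - beta * x n) * (l * u) + c0 * ((1 - l) * u) - (p X - alpha * x n) * v
         \<le> C n y - C n (x n)"
proof -
  define r where "r = rderiv (C n) (x n)"
  have tangent: "r * (y - x n) \<le> C n y - C n (x n)"
    using C_tangent_le[OF n x_nonneg[OF n] y] by (simp add: r_def)
  show ?thesis
  proof (cases "x n \<le> y")
    case True
    then have uv: "u = y - x n" "v = 0" by (simp_all add: u_def v_def)
    have "(p X - beta * x n) * (l * u) \<le> r * (l * u)"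
      using foc_lower[OF n] l uv True by (intro mult_right_mono) (auto simp: r_def)
    moreover have "c0 * ((1 - l) * u) \<le> r * ((1 - l) * u)"
      using c0_le_rderiv[OF n x_nonneg[OF n]] l uv True by (intro mult_right_mono) (auto simp: r_def)
    moreover have "r * (y - x n) = r * (l * u) + r * ((1 - l) * u)" by (simp add: uv algebra_simps)
    ultimately show ?thesis using tangent uv by simp
  next
    case False
    then have uv: "u = 0" "v = x n - y" by (simp_all add: u_def v_def)
    have "r * v \<le> (p X - alpha * x n) * v"
      using foc_upper[OF n] False y uv by (intro mult_right_mono) (auto simp: r_def)
    moreover have "r * (y - x n) = - (r * v)" unfolding uv(2) by (simp add: algebra_simps)
    moreover have "(p X - beta * x n) * (l * u) + c0 * ((1 - l) * u) = 0" using uv by simp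
    ultimately show ?thesis using tangent by linarith
  qed
qed

lemma cost_change_sum_ge:
  assumes y: "nonneg_vec N y" and l: "0 \<le> l" "l \<le> 1"
  defines "u \<equiv> \<lambda>n. max (y n - x n) 0" and "v \<equiv> \<lambda>n. max (x n - y n) 0"
  shows "l * (p X * (\<Sum>n<N. u n) - beta * (\<Sum>n<N. x n * u n)) + c0 * (1 - l) * (\<Sum>n<N. u n)
           - p X * (\<Sum>n<N. v n) + alpha * (\<Sum>n<N. x n * v n)
         \<le> (\<Sum>n<N. C n (y n)) - (\<Sum>n<N. C n (x n))"
proof -
  have "(\<Sum>n<N. (p X - beta * x n) * (l * u n) + c0 * ((1 - l) * u n) - (p X - alpha * x n) * v n)
        \<le> (\<Sum>n<N. C n (y n) - C n (x n))"
    using y l unfolding nonneg_vec_def u_def v_def by (intro sum_mono cost_change_ge) auto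
  then show ?thesis
    by (simp add: sum.distrib sum_subtractf sum_negf sum_distrib_left sum_distrib_right algebra_simps)
qed

text \<open>Lowering output from X to Y loses at least the revenue under the left tangent at X.\<close>
lemma revenue_change_below:
  assumes Y: "0 \<le> Y" "Y \<le> X"
  shows "integral {0..Y} p - integral {0..X} p \<le> p X * (Y - X) - alpha * (Y - X)^2 / 2"
proof -
  have "(p X + alpha * (X - Y)) * (X - Y) + (- alpha) * (X - Y)^2 / 2 \<le> integral {Y..X} p"
    using p_left_tangent_le[of _ X] total_pos Y
    by (intro integral_ge_affine p_continuous_on) (auto simp: algebra_simps)
  moreover have "(p X + alpha * (X - Y)) * (X - Y) + (- alpha) * (X - Y)^2 / 2
                 = - (p X * (Y - X) - alpha * (Y - X)^2 / 2)"
    by (simp add: power2_eq_square field_simps)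
  moreover have "integral {0..Y} p + integral {Y..X} p = integral {0..X} p"
    using p_integral_split[of 0 Y X] Y by simp
  ultimately show ?thesis by linarith
qed

text \<open>Raising output from X to Y: up to Y' = max X (min Y s) the price stays below the line
  of slope p'_-(s) through (X, p X), and beyond s it is at most c0.\<close>
lemma revenue_change_above:
  assumes XY: "X \<le> Y" and Y': "Y' = max X (min Y s)"
  shows "integral {0..Y} p - integral {0..X} p
         \<le> p X * (Y' - X) + lderiv p s * (Y' - X)^2 / 2 + c0 * (Y - Y')"
proof -
  have s: "0 < s" using s_pos_and_price by simp
  have bounds: "X \<le> Y'" "Y' \<le> Y" using XY Y' by auto
  have "integral {X..Y'} p \<le> p X * (Y' - X) + lderiv p s * (Y' - X)^2 / 2"
  proof (rule integral_le_affine[OF bounds(1) p_continuous_on])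
    fix q assume q: "q \<in> {X..Y'}"
    show "p q \<le> p X + lderiv p s * (q - X)"
    proof (cases "q = X")
      case False
      then have "q \<le> s" using q Y' by (auto simp: max_def min_def split: if_splits)
      then show ?thesis using p_le_left_slope_line[of X q s] q total_pos s by auto
    qed simp
  qed (use total_pos in simp)
  moreover have "integral {Y'..Y} p \<le> c0 * (Y - Y')"
  proof (cases "Y' = Y")
    case False
    then have "s \<le> Y'" using Y' XY by (auto simp: max_def min_def split: if_splits)
    then have "integral {Y'..Y} p \<le> c0 * (Y - Y') + 0 * (Y - Y')^2 / 2"
      using price_beyond_s bounds s by (intro integral_le_affine p_continuous_on) auto
    then show ?thesis by simp
  qed simp
  moreover have "integral {0..X} p + integral {X..Y'} p + integral {Y'..Y} p = integral {0..Y} p"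
    using p_integral_split[of 0 X Y'] p_integral_split[of 0 Y' Y] bounds total_pos by simp
  ultimately show ?thesis by simp
qed

text \<open>Both cases in one form: a weight l in [0, 1] splits the gross increase T of supply into
  a part l T - V = Y' - X priced along a line of slope -k and a part (1 - l) T priced at c0.\<close>
lemma revenue_change_le:
  assumes Y: "0 \<le> Y" and V: "0 \<le> V" and YX: "Y - X = T - V"
    and k: "k \<le> alpha" "k \<le> - lderiv p s"
  obtains l Y' where "0 \<le> l" "l \<le> 1" "l * T - V = Y' - X" "(1 - l) * T = Y - Y'"
    "integral {0..Y} p - integral {0..X} p \<le> p X * (Y' - X) - k * (Y' - X)^2 / 2 + c0 * (Y - Y')"
proof (cases "Y \<le> X")
  case True
  have "k * (Y - X)^2 \<le> alpha * (Y - X)^2" using k by (intro mult_right_mono) auto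
  then show ?thesis using that[of 1 Y] revenue_change_below[OF Y True] YX by simp
next
  case False
  define Y' where "Y' = max X (min Y s)"
  have bounds: "X \<le> Y'" "Y' \<le> Y" using False by (auto simp: Y'_def)
  have T: "0 < T" using YX V False by simp
  define l where "l = (Y' - X + V) / T"
  have lT: "l * T = Y' - X + V" using T by (simp add: l_def)
  show ?thesis
  proof (rule that[of l Y'])
    show "0 \<le> l" using bounds V T by (simp add: l_def)
    show "l \<le> 1" using bounds YX T by (simp add: l_def pos_divide_le_eq)
    show "l * T - V = Y' - X" "(1 - l) * T = Y - Y'" using lT YX by (simp_all add: algebra_simps)
    have "k * (Y' - X)^2 \<le> - lderiv p s * (Y' - X)^2" using k by (intro mult_right_mono) auto
    then show "integral {0..Y} p - integral {0..X} p \<le> p X * (Y' - X) - k * (Y' - X)^2 / 2 + c0 * (Y - Y')"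
      using revenue_change_above[OF _ Y'_def] False by simp
  qed
qed

text \<open>The curvature used for the revenue bound: beta / c is below both alpha and -p'_-(s),
  the latter because c p'_-(s) = p'_+(t) <= -beta.\<close>
lemma scaled_beta_le: "beta / slope_ratio \<le> alpha" "beta / slope_ratio \<le> - lderiv p s"
proof -
  have c: "1 \<le> slope_ratio" by (rule slope_ratio_ge_1)
  then have c_pos: "0 < slope_ratio" by simp
  have "0 \<le> alpha" using beta_le_alpha beta_nonneg by linarith
  then have "alpha * 1 \<le> alpha * slope_ratio" by (rule mult_left_mono[OF c])
  then show "beta / slope_ratio \<le> alpha"
    unfolding pos_divide_le_eq[OF c_pos] using beta_le_alpha by linarith
  have "- lderiv p s * slope_ratio = - rderiv p t" using lderiv_s_neg by simp
  then show "beta / slope_ratio \<le> - lderiv p s"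
    unfolding pos_divide_le_eq[OF c_pos] using beta_le_rderiv_t by linarith
qed

lemma total_change_split:
  "total N y - X = (\<Sum>n<N. max (y n - x n) 0) - (\<Sum>n<N. max (x n - y n) 0)"
proof -
  have "total N y - X = (\<Sum>n<N. y n - x n)" by (simp add: total_def sum_subtractf)
  also have "\<dots> = (\<Sum>n<N. max (y n - x n) 0 - max (x n - y n) 0)" by (intro sum.cong) auto
  finally show ?thesis by (simp add: sum_subtractf)
qed

lemma welfare_gain_le:
  assumes y: "nonneg_vec N y"
  shows "welfare N p C y - welfare N p C x \<le> beta * (xmax * (X - xmax) + slope_ratio * xmax^2 / 2)"
proof -
  define u where "u = (\<lambda>n. max (y n - x n) 0)"
  define v where "v = (\<lambda>n. max (x n - y n) 0)"
  define T where "T = (\<Sum>n<N. u n)"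
  define V where "V = (\<Sum>n<N. v n)"
  define A where "A = (\<Sum>n<N. x n * u n)"
  define B where "B = (\<Sum>n<N. x n * v n)"
  define k where "k = beta / slope_ratio"
  have c: "1 \<le> slope_ratio" by (rule slope_ratio_ge_1)
  have k: "k \<le> alpha" "k \<le> - lderiv p s" unfolding k_def by (fact scaled_beta_le)+
  have V0: "0 \<le> V" unfolding V_def v_def by (intro sum_nonneg) auto
  have B0: "0 \<le> B" unfolding B_def v_def using x_nonneg by (intro sum_nonneg) auto
  have Y0: "0 \<le> total N y" using y unfolding total_def nonneg_vec_def by (intro sum_nonneg) auto
  have YX: "total N y - X = T - V"
    unfolding T_def V_def u_def v_def by (rule total_change_split)
  obtain l Y' where l: "0 \<le> l" "l \<le> 1" "l * T - V = Y' - X" "(1 - l) * T = total N y - Y'"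
    and revenue: "integral {0..total N y} p - integral {0..X} p
                  \<le> p X * (Y' - X) - k * (Y' - X)^2 / 2 + c0 * (total N y - Y')"
    using revenue_change_le[OF Y0 V0 YX k] by blast
  have costs: "l * (p X * T - beta * A) + c0 * (1 - l) * T - p X * V + alpha * B
               \<le> (\<Sum>n<N. C n (y n)) - (\<Sum>n<N. C n (x n))"
    unfolding T_def V_def A_def B_def u_def v_def using cost_change_sum_ge[OF y l(1,2)] .
  have "welfare N p C y - welfare N p C x
        \<le> p X * (Y' - X) - k * (Y' - X)^2 / 2 + c0 * (total N y - Y')
          - (l * (p X * T - beta * A) + c0 * (1 - l) * T - p X * V + alpha * B)"
    using revenue costs unfolding welfare_def by linarith
  also have "\<dots> = l * beta * A - alpha * B - k * (l * T - V)^2 / 2"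
    by (simp only: l(3)[symmetric] l(4)[symmetric]) (simp add: algebra_simps)
  also have "\<dots> \<le> beta * (l * A - B - (l * T - V)^2 / (2 * slope_ratio))"
    using mult_right_mono[OF beta_le_alpha B0] c by (simp add: k_def field_simps)
  also have "\<dots> \<le> beta * (xmax * (X - xmax) + slope_ratio * xmax^2 / 2)"
  proof (intro mult_left_mono beta_nonneg)
    have "l * A - B - (l * T - V)^2 / (2 * slope_ratio)
          \<le> xmax * ((\<Sum>n<N. x n) - xmax) + slope_ratio * xmax^2 / 2"
      unfolding A_def B_def T_def V_def
      by (rule reallocation_gain_le[OF N_pos x_nonneg])
         (use c l(1) x_nonneg y in \<open>auto simp: u_def v_def nonneg_vec_def\<close>)
    then show "l * A - B - (l * T - V)^2 / (2 * slope_ratio)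
               \<le> xmax * (X - xmax) + slope_ratio * xmax^2 / 2"
      by (simp only: total_eq_sum)
  qed
  finally show ?thesis .
qed

lemma welfare_gain_le_kappa:
  assumes y: "nonneg_vec N y"
  shows "welfare N p C y \<le> (1 + kappa slope_ratio) * welfare N p C x"
proof -
  let ?K = "kappa slope_ratio"
  have K: "0 \<le> ?K" using kappa_nonneg slope_ratio_ge_1 by blast
  have m: "0 \<le> xmax" "xmax \<le> X" "xmax^2 \<le> (\<Sum>n<N. (x n)^2)" by (fact xmax_props)+
  have "welfare N p C y - welfare N p C x \<le> beta * (xmax * (X - xmax) + slope_ratio * xmax^2 / 2)"
    by (rule welfare_gain_le[OF y])
  also have "\<dots> \<le> beta * (?K * (X^2 / 2 + xmax^2))"
    by (intro mult_left_mono kappa_bound slope_ratio_ge_1 m(1,2) beta_nonneg)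
  also have "\<dots> \<le> alpha * (?K * (X^2 / 2 + (\<Sum>n<N. (x n)^2)))"
    using m(3) K beta_le_alpha beta_nonneg by (intro mult_mono mult_left_mono) auto
  also have "\<dots> \<le> ?K * welfare N p C x"
    using mult_left_mono[OF welfare_candidate_lower K] by (simp add: mult.left_commute)
  finally show ?thesis by (simp add: algebra_simps)
qed

text \<open>Since x itself is feasible, W(x^S) lies between W(x) > 0 and (1 + kappa(c)) W(x).\<close>
lemma efficiency_ge:
  assumes opt: "social_optimum N p C xS"
  shows "f_bound slope_ratio \<le> efficiency N p C xS x"
proof -
  let ?K = "kappa slope_ratio"
  have K: "0 \<le> ?K" using kappa_nonneg slope_ratio_ge_1 by blast
  have Wx: "0 < welfare N p C x" by (rule welfare_candidate_pos)
  have "welfare N p C xS \<le> (1 + ?K) * welfare N p C x"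
    using opt welfare_gain_le_kappa unfolding social_optimum_def by blast
  moreover have "welfare N p C x \<le> welfare N p C xS"
    using opt candidate unfolding social_optimum_def cournot_candidate_def by blast
  ultimately show ?thesis
    unfolding efficiency_def f_bound_kappa using Wx K by (simp add: field_simps)
qed

end

theorem corollary2:
  fixes N :: nat and p :: "real \<Rightarrow> real" and C :: "nat \<Rightarrow> real \<Rightarrow> real"
    and x xS :: "nat \<Rightarrow> real"
  assumes N_pos: "0 < N"
    and A1_convex: "\<forall>n<N. convex_on {0..} (C n)"
    and A1_cont: "\<forall>n<N. continuous_on {0..} (C n)"
    and A1_mono: "\<forall>n<N. mono_on {0..} (C n)"
    and A1_diff: "\<forall>n<N. \<forall>q>0. (C n) differentiable (at q)"
    and A1_C1: "\<forall>n<N. continuous_on {0<..} (deriv (C n))"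
    and A1_zero: "\<forall>n<N. C n 0 = 0"
    and A2_cont: "continuous_on {0..} p"
    and A2_nonneg: "\<forall>q\<ge>0. 0 \<le> p q"
    and A2_noninc: "antimono_on {0..} p"
    and A2_p0: "0 < p 0"
    and A2_rderiv: "\<forall>q\<ge>0. \<exists>D. (p has_real_derivative D) (at q within {q..})"
    and A2_lderiv: "\<forall>q>0. \<exists>D. (p has_real_derivative D) (at q within {..q})"
    and A3: "\<exists>R>0. p R \<le> minC' N C 0"
    and A4: "p 0 > minC' N C 0"
    and p_convex: "convex_on {0..} p"
    and s_def: "s = Inf {q. 0 \<le> q \<and> p q = minC' N C 0}"
    and t_def: "t = Inf {q. 0 \<le> q \<and> minC' N C q \<ge> p q + q * rderiv p q}"
    and slope: "lderiv p s < 0"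
    and cand: "cournot_candidate N p C x"
    and opt: "social_optimum N p C xS"
  shows "efficiency N p C xS x \<ge> f_bound (rderiv p t / lderiv p s)"
proof -
  interpret cournot_candidate_point N p C s t x
    by unfold_locales (use N_pos A1_convex A1_mono A1_diff A1_zero A2_cont A2_noninc A2_rderiv
        A2_lderiv A3 A4 p_convex s_def t_def slope cand in auto)
  show ?thesis using efficiency_ge[OF opt] .
qed

end
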